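(* A Bratteli diagram $B$ admits an ordering $\omega\in\mathcal O_B$ with $\mathrm{Int}(X_{\max}(\omega))\neq\emptyset$ if and only if there exist $x=(x_i)\in X_B$ and $n\ge1$ such that the cylinder set $U(x_1,\dots,x_n)=\{y\in X_B: y_i=x_i,\ i=1,\dots,n\}$ meets each tail-equivalence class in at most one point. The same statement holds with $X_{\min}(\omega)$ in place of $X_{\max}(\omega)$.
   Context: A Bratteli diagram $B=(V^*,E)$ has levels $V_n$ ($V_0=\{v_0\}$, all finite) and finite edge sets $E_n$ from $V_{n-1}$ to $V_n$, with source and range maps $s,r$. $X_B$ is the space of infinite paths $(x_1,x_2,\dots)$, $x_n\in E_n$, $s(x_1)=v_0$, $r(x_n)=s(x_{n+1})$, with topology generated by cylinder sets. Two paths are tail equivalent if they agree from some index on. An ordering $\omega$ is a choice of linear order on $r^{-1}(v)$ for each $v\neq v_0$; $\mathcal O_B$ is the set of orderings. $X_{\max}(\omega)$ ($X_{\min}(\omega)$) is the set of infinite paths each of whose edges is maximal (minimal) in $r^{-1}$ of its range. $\mathrm{Int}$ denotes topological interior in $X_B$. *)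

theory Defs
  imports "HOL-Analysis.Analysis"
begin

definition bratteli ::
  "(nat \<Rightarrow> 'v set) \<Rightarrow> (nat \<Rightarrow> 'e set) \<Rightarrow> ('e \<Rightarrow> 'v) \<Rightarrow> ('e \<Rightarrow> 'v) \<Rightarrow> 'v \<Rightarrow> bool" where
  "bratteli V E src rng v0 \<longleftrightarrow>
     V 0 = {v0} \<and> E 0 = {} \<and>
     (\<forall>n. finite (V n) \<and> V n \<noteq> {} \<and> finite (E n)) \<and>
     (\<forall>m n. m \<noteq> n \<longrightarrow> V m \<inter> V n = {} \<and> E m \<inter> E n = {}) \<and>
     (\<forall>n. \<forall>e\<in>E (Suc n). src e \<in> V n \<and> rng e \<in> V (Suc n)) \<and>
     (\<forall>n. \<forall>v\<in>V (Suc n). \<exists>e\<in>E (Suc n). rng e = v) \<and>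
     (\<forall>n. \<forall>v\<in>V n. \<exists>e\<in>E (Suc n). src e = v)"

text \<open>Infinite paths; x i is the edge x_(i+1) \<in> E (i+1) (0-based indexing).\<close>
definition paths ::
  "(nat \<Rightarrow> 'e set) \<Rightarrow> ('e \<Rightarrow> 'v) \<Rightarrow> ('e \<Rightarrow> 'v) \<Rightarrow> 'v \<Rightarrow> (nat \<Rightarrow> 'e) set" where
  "paths E src rng v0 = {x. (\<forall>i. x i \<in> E (Suc i)) \<and> src (x 0) = v0 \<and>
                             (\<forall>i. rng (x i) = src (x (Suc i)))}"

definition cyl :: "(nat \<Rightarrow> 'e) set \<Rightarrow> (nat \<Rightarrow> 'e) \<Rightarrow> nat \<Rightarrow> (nat \<Rightarrow> 'e) set" where
  "cyl X x n = {y \<in> X. \<forall>i<n. y i = x i}"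

definition path_topology ::
  "(nat \<Rightarrow> 'e set) \<Rightarrow> ('e \<Rightarrow> 'v) \<Rightarrow> ('e \<Rightarrow> 'v) \<Rightarrow> 'v \<Rightarrow> (nat \<Rightarrow> 'e) topology" where
  "path_topology E src rng v0 =
     subtopology (topology_generated_by
        {cyl (paths E src rng v0) x n | x n. x \<in> paths E src rng v0})
       (paths E src rng v0)"

definition tail_equiv :: "(nat \<Rightarrow> 'e) \<Rightarrow> (nat \<Rightarrow> 'e) \<Rightarrow> bool" where
  "tail_equiv x y \<longleftrightarrow> (\<exists>N. \<forall>i\<ge>N. x i = y i)"

definition rinv :: "(nat \<Rightarrow> 'e set) \<Rightarrow> ('e \<Rightarrow> 'v) \<Rightarrow> 'v \<Rightarrow> 'e set" where
  "rinv E rng v = {e. \<exists>n. e \<in> E n \<and> rng e = v}"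

definition orderings ::
  "(nat \<Rightarrow> 'v set) \<Rightarrow> (nat \<Rightarrow> 'e set) \<Rightarrow> ('e \<Rightarrow> 'v) \<Rightarrow> ('v \<Rightarrow> 'e rel) set" where
  "orderings V E rng = {\<omega>. \<forall>n. \<forall>v\<in>V (Suc n). linear_order_on (rinv E rng v) (\<omega> v)}"

definition Xmax ::
  "(nat \<Rightarrow> 'e set) \<Rightarrow> ('e \<Rightarrow> 'v) \<Rightarrow> ('e \<Rightarrow> 'v) \<Rightarrow> 'v \<Rightarrow> ('v \<Rightarrow> 'e rel) \<Rightarrow> (nat \<Rightarrow> 'e) set" where
  "Xmax E src rng v0 \<omega> = {x \<in> paths E src rng v0.
      \<forall>i. \<forall>f\<in>rinv E rng (rng (x i)). (f, x i) \<in> \<omega> (rng (x i))}"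

definition Xmin ::
  "(nat \<Rightarrow> 'e set) \<Rightarrow> ('e \<Rightarrow> 'v) \<Rightarrow> ('e \<Rightarrow> 'v) \<Rightarrow> 'v \<Rightarrow> ('v \<Rightarrow> 'e rel) \<Rightarrow> (nat \<Rightarrow> 'e) set" where
  "Xmin E src rng v0 \<omega> = {x \<in> paths E src rng v0.
      \<forall>i. \<forall>f\<in>rinv E rng (rng (x i)). (x i, f) \<in> \<omega> (rng (x i))}"

end

theory Submission
  imports Defs
begin

(* Call a set of paths tail-injective if it meets every tail-equivalence
   class in at most one point.
   (=>) Two maximal paths that are tail equivalent coincide: walking backwards from the
   level where they agree, both enter the same vertex through the maximal edge into it.
   Hence X_max(omega) is tail-injective, and so is every cylinder inside an open subset
   of it; cylinders of length >= 1 form a neighbourhood base.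
   (<=) If the cylinder U = U(x_1..x_n) is tail-injective, two paths of U entering the
   same vertex use the same last edge (otherwise splicing them there gives a second path
   of U tail equivalent to one of them).  So every vertex has at most one edge used by
   U; ordering each r^{-1}(v) with that edge on top puts the open set U inside X_max.
   The X_min statement follows by reversing all orders, which swaps X_min and X_max. *)

definition tail_injective :: "(nat \<Rightarrow> 'e) set \<Rightarrow> bool" where
  "tail_injective A \<longleftrightarrow> (\<forall>y\<in>A. \<forall>z\<in>A. tail_equiv y z \<longrightarrow> y = z)"

lemma tail_injective_subset: "A \<subseteq> B \<Longrightarrow> tail_injective B \<Longrightarrow> tail_injective A"
  unfolding tail_injective_def by blast

definition raise_to_top :: "'a set \<Rightarrow> 'a rel \<Rightarrow> 'a \<Rightarrow> 'a rel" where
  "raise_to_top A r e = {(a, b). (a, b) \<in> r \<and> a \<noteq> e \<and> b \<noteq> e} \<union> {(a, b). a \<in> A \<and> b = e}"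

lemma raise_to_top_linear:
  assumes lin: "linear_order_on A r" and e: "e \<in> A"
  shows "linear_order_on A (raise_to_top A r e)"
proof -
  have sub: "r \<subseteq> A \<times> A" and refl: "\<forall>a\<in>A. (a, a) \<in> r" and "trans r" and "antisym r"
    and "total_on A r"
    using lin unfolding linear_order_on_def partial_order_on_def preorder_on_def refl_on_def
    by auto
  then have tr: "\<And>a b c. (a, b) \<in> r \<Longrightarrow> (b, c) \<in> r \<Longrightarrow> (a, c) \<in> r"
    and an: "\<And>a b. (a, b) \<in> r \<Longrightarrow> (b, a) \<in> r \<Longrightarrow> a = b"
    and tot: "\<And>a b. a \<in> A \<Longrightarrow> b \<in> A \<Longrightarrow> a \<noteq> b \<Longrightarrow> (a, b) \<in> r \<or> (b, a) \<in> r"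
    unfolding trans_def antisym_def total_on_def by blast+
  let ?m = "raise_to_top A r e"
  have "?m \<subseteq> A \<times> A" "\<forall>a\<in>A. (a, a) \<in> ?m"
    using sub refl e unfolding raise_to_top_def by auto
  moreover have "trans ?m" unfolding trans_def raise_to_top_def using tr sub by blast
  moreover have "antisym ?m" unfolding antisym_def raise_to_top_def using an by blast
  moreover have "total_on A ?m" unfolding total_on_def raise_to_top_def using tot by blast
  ultimately show ?thesis
    unfolding linear_order_on_def partial_order_on_def preorder_on_def refl_on_def by blast
qed

lemma raise_to_top_max: "a \<in> A \<Longrightarrow> (a, e) \<in> raise_to_top A r e"
  unfolding raise_to_top_def by blast

lemma cyl_mono: "n \<le> m \<Longrightarrow> cyl X p m \<subseteq> cyl X p n"
  unfolding cyl_def by auto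

lemma generated_contains_cyl:
  assumes "generate_topology_on {cyl X x n | x n. x \<in> X} G" "p \<in> G" "p \<in> X"
  shows "\<exists>n. cyl X p n \<subseteq> G"
  using assms
proof (induction arbitrary: p rule: generate_topology_on.induct)
  case Empty then show ?case by simp
next
  case (Int a b)
  then obtain n1 n2 where "cyl X p n1 \<subseteq> a" "cyl X p n2 \<subseteq> b" by blast
  then have "cyl X p (max n1 n2) \<subseteq> a \<inter> b"
    using cyl_mono[of n1 "max n1 n2" X p] cyl_mono[of n2 "max n1 n2" X p] by auto
  then show ?case by blast
next
  case (UN K)
  then obtain k where "k \<in> K" "p \<in> k" by blast
  with UN obtain n where "cyl X p n \<subseteq> k" by blast
  with \<open>k \<in> K\<close> show ?case by blast
next
  case (Basis s)
  then obtain x n where "s = cyl X x n" by blast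
  with Basis have "cyl X p n = s" unfolding cyl_def by auto
  then show ?case by blast
qed

lemma open_contains_cyl:
  assumes "openin (path_topology E src rng v0) S" "p \<in> S"
  obtains n where "n \<ge> 1" "cyl (paths E src rng v0) p n \<subseteq> S"
proof -
  let ?X = "paths E src rng v0"
  obtain G where G: "openin (topology_generated_by {cyl ?X x n | x n. x \<in> ?X}) G" "S = G \<inter> ?X"
    using assms(1) unfolding path_topology_def openin_subtopology by blast
  then obtain n where "cyl ?X p n \<subseteq> G"
    using generated_contains_cyl[OF openin_topology_generated_by[OF G(1)]] assms(2) by blast
  then have "cyl ?X p (Suc n) \<subseteq> S"
    using cyl_mono[of n "Suc n" ?X p] G(2) unfolding cyl_def by auto
  then show ?thesis using that[of "Suc n"] by simp
qed

lemma cyl_open: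
  assumes "x \<in> paths E src rng v0"
  shows "openin (path_topology E src rng v0) (cyl (paths E src rng v0) x n)"
proof -
  let ?X = "paths E src rng v0"
  have "cyl ?X x n \<in> {cyl ?X x n | x n. x \<in> ?X}" using assms by blast
  then have "openin (topology_generated_by {cyl ?X x n | x n. x \<in> ?X}) (cyl ?X x n)"
    by (rule topology_generated_by_Basis)
  moreover have "cyl ?X x n = cyl ?X x n \<inter> ?X" unfolding cyl_def by blast
  ultimately show ?thesis unfolding path_topology_def openin_subtopology by blast
qed

lemma rng_path_level:
  "bratteli V E src rng v0 \<Longrightarrow> x \<in> paths E src rng v0 \<Longrightarrow> rng (x i) \<in> V (Suc i)"
  unfolding bratteli_def paths_def by blast

lemma path_edge_rinv: "x \<in> paths E src rng v0 \<Longrightarrow> x i \<in> rinv E rng (rng (x i))"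
  unfolding rinv_def paths_def by blast

lemma common_vertex_same_level:
  assumes "bratteli V E src rng v0" "y \<in> paths E src rng v0" "z \<in> paths E src rng v0"
    "rng (y k) = rng (z j)"
  shows "k = j"
proof (rule ccontr)
  assume "k \<noteq> j"
  then have "V (Suc k) \<inter> V (Suc j) = {}" using assms(1) unfolding bratteli_def by auto
  moreover have "rng (y k) \<in> V (Suc k)" "rng (z j) \<in> V (Suc j)"
    using rng_path_level assms(1-3) by metis+
  ultimately show False using assms(4) by auto
qed

lemma splice_path:
  assumes y: "y \<in> paths E src rng v0" and z: "z \<in> paths E src rng v0"
    and meet: "rng (y k) = rng (z k)"
  shows "(\<lambda>i. if i \<le> k then y i else z i) \<in> paths E src rng v0"
  unfolding paths_def
proof (intro CollectI conjI allI)
  fix i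
  show "(if i \<le> k then y i else z i) \<in> E (Suc i)" using y z unfolding paths_def by simp
  show "rng (if i \<le> k then y i else z i) = src (if Suc i \<le> k then y (Suc i) else z (Suc i))"
    using y z meet unfolding paths_def by (cases "i < k"; cases "i = k"; simp)
next
  show "src (if 0 \<le> k then y 0 else z 0) = v0" using y unfolding paths_def by simp
qed

lemma tail_equiv_backward_eq:
  assumes "tail_equiv y z" and step: "\<And>i. y (Suc i) = z (Suc i) \<Longrightarrow> y i = z i"
  shows "y = z"
proof -
  obtain N where N: "\<forall>i\<ge>N. y i = z i" using assms(1) unfolding tail_equiv_def by blast
  have "y i = z i" if "i + d \<ge> N" for i d
    using that by (induction d arbitrary: i) (auto simp: N intro: step)
  then show ?thesis by (metis le_add2 ext)
qed

subsection \<open>Open subsets of X_max are tail-injective\<close>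

text \<open>Tail equivalent maximal paths coincide: going down level by level, both enter
  the same vertex through its unique maximal edge.\<close>
lemma Xmax_tail_injective:
  assumes br: "bratteli V E src rng v0" and om: "\<omega> \<in> orderings V E rng"
  shows "tail_injective (Xmax E src rng v0 \<omega>)"
  unfolding tail_injective_def
proof (intro ballI impI)
  fix y z assume y: "y \<in> Xmax E src rng v0 \<omega>" and z: "z \<in> Xmax E src rng v0 \<omega>"
    and tail: "tail_equiv y z"
  have yp: "y \<in> paths E src rng v0" and zp: "z \<in> paths E src rng v0"
    using y z unfolding Xmax_def by auto
  show "y = z"
  proof (rule tail_equiv_backward_eq[OF tail])
    fix i assume "y (Suc i) = z (Suc i)"
    then have w: "rng (z i) = rng (y i)" using yp zp unfolding paths_def by simp
    let ?w = "rng (y i)"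
    have "linear_order_on (rinv E rng ?w) (\<omega> ?w)"
      using om rng_path_level[OF br yp] unfolding orderings_def by blast
    then have "antisym (\<omega> ?w)" unfolding linear_order_on_def partial_order_on_def by auto
    moreover have "\<forall>f\<in>rinv E rng (rng (y i)). (f, y i) \<in> \<omega> (rng (y i))"
      and "\<forall>f\<in>rinv E rng (rng (z i)). (f, z i) \<in> \<omega> (rng (z i))"
      using y z unfolding Xmax_def by blast+
    then have "(z i, y i) \<in> \<omega> ?w" "(y i, z i) \<in> \<omega> ?w"
      using path_edge_rinv[OF yp, of i] path_edge_rinv[OF zp, of i] w by simp_all
    ultimately show "y i = z i" unfolding antisym_on_def by blast
  qed
qed

lemma Xmax_interior_cyl:
  assumes "bratteli V E src rng v0" "\<omega> \<in> orderings V E rng"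
    and "path_topology E src rng v0 interior_of Xmax E src rng v0 \<omega> \<noteq> {}"
  shows "\<exists>x\<in>paths E src rng v0. \<exists>n\<ge>1. tail_injective (cyl (paths E src rng v0) x n)"
proof -
  obtain p where "p \<in> path_topology E src rng v0 interior_of Xmax E src rng v0 \<omega>"
    using assms(3) by blast
  then obtain S where S: "openin (path_topology E src rng v0) S" "p \<in> S"
    "S \<subseteq> Xmax E src rng v0 \<omega>"
    unfolding interior_of_def by blast
  then have p: "p \<in> paths E src rng v0" unfolding Xmax_def by blast
  obtain n where n: "n \<ge> 1" "cyl (paths E src rng v0) p n \<subseteq> S"
    by (rule open_contains_cyl[OF S(1,2)])
  have "tail_injective (cyl (paths E src rng v0) p n)"
    using tail_injective_subset[OF _ Xmax_tail_injective[OF assms(1,2)]] n(2) S(3) by blast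
  then show ?thesis using p n(1) by blast
qed

subsection \<open>A tail-injective cylinder lies in the interior of some X_max\<close>

lemma tail_injective_cyl_edge_unique:
  assumes br: "bratteli V E src rng v0"
    and inj: "tail_injective (cyl (paths E src rng v0) x n)"
    and y: "y \<in> cyl (paths E src rng v0) x n" and z: "z \<in> cyl (paths E src rng v0) x n"
    and meet: "rng (y k) = rng (z j)"
  shows "y k = z j"
proof -
  let ?X = "paths E src rng v0"
  have yp: "y \<in> ?X" and zp: "z \<in> ?X" using y z unfolding cyl_def by auto
  have kj: "k = j" using common_vertex_same_level[OF br yp zp meet] .
  define s where "s i = (if i \<le> k then y i else z i)" for i
  have "s \<in> ?X" unfolding s_def using splice_path[OF yp zp] meet kj by simp
  then have "s \<in> cyl ?X x n" using y z unfolding cyl_def s_def by auto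
  moreover have "tail_equiv s z" unfolding tail_equiv_def s_def by (rule exI[of _ "Suc k"]) auto
  ultimately have "s = z" using inj z unfolding tail_injective_def by blast
  then have "s k = z k" by simp
  then show ?thesis using kj by (simp add: s_def)
qed

lemma tail_injective_cyl_common_edge:
  assumes br: "bratteli V E src rng v0"
    and inj: "tail_injective (cyl (paths E src rng v0) x n)" and w: "w \<in> V (Suc m)"
  shows "\<exists>e. e \<in> rinv E rng w \<and>
           (\<forall>y\<in>cyl (paths E src rng v0) x n. \<forall>k. rng (y k) = w \<longrightarrow> y k = e)"
proof (cases "\<exists>y\<in>cyl (paths E src rng v0) x n. \<exists>k. rng (y k) = w")
  case True
  then obtain y k where y: "y \<in> cyl (paths E src rng v0) x n" and yw: "rng (y k) = w" by blast
  then have "y \<in> paths E src rng v0" unfolding cyl_def by blast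
  then have "y k \<in> rinv E rng w" using path_edge_rinv yw by metis
  moreover have "\<forall>z\<in>cyl (paths E src rng v0) x n. \<forall>j. rng (z j) = w \<longrightarrow> z j = y k"
    using tail_injective_cyl_edge_unique[OF br inj] y yw by metis
  ultimately show ?thesis by blast
next
  case False
  obtain e where "e \<in> E (Suc m)" "rng e = w" using br w unfolding bratteli_def by blast
  then show ?thesis using False unfolding rinv_def by blast
qed

lemma ordering_with_prescribed_maxima:
  assumes "\<And>m w. w \<in> V (Suc m) \<Longrightarrow> t w \<in> rinv E rng w"
  shows "\<exists>\<omega>\<in>orderings V E rng. \<forall>m. \<forall>w\<in>V (Suc m). \<forall>f\<in>rinv E rng w. (f, t w) \<in> \<omega> w"
proof -
  define base where "base w = (SOME r. well_order_on (rinv E rng w) r)" for w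
  define \<omega> where "\<omega> w = raise_to_top (rinv E rng w) (base w) (t w)" for w
  have base: "linear_order_on (rinv E rng w) (base w)" for w
    using someI_ex[OF well_order_on[of "rinv E rng w"]] unfolding base_def well_order_on_def
    by blast
  have "\<omega> \<in> orderings V E rng"
    unfolding orderings_def \<omega>_def using raise_to_top_linear[OF base assms] by blast
  moreover have "(f, t w) \<in> \<omega> w" if "f \<in> rinv E rng w" for f w
    unfolding \<omega>_def using that by (rule raise_to_top_max)
  ultimately show ?thesis by blast
qed

text \<open>Putting those common edges on top makes the (open) cylinder part of X_max.\<close>
lemma cyl_Xmax_interior:
  assumes br: "bratteli V E src rng v0" and xX: "x \<in> paths E src rng v0"
    and inj: "tail_injective (cyl (paths E src rng v0) x n)"
  shows "\<exists>\<omega>\<in>orderings V E rng. path_topology E src rng v0 interior_of Xmax E src rng v0 \<omega> \<noteq> {}"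
proof -
  let ?U = "cyl (paths E src rng v0) x n"
  define t where "t w = (SOME e. e \<in> rinv E rng w \<and> (\<forall>y\<in>?U. \<forall>k. rng (y k) = w \<longrightarrow> y k = e))"
    for w
  have t: "t w \<in> rinv E rng w \<and> (\<forall>y\<in>?U. \<forall>k. rng (y k) = w \<longrightarrow> y k = t w)"
    if "w \<in> V (Suc m)" for m w
    unfolding t_def by (rule someI_ex[OF tail_injective_cyl_common_edge[OF br inj that]])
  obtain \<omega> where om: "\<omega> \<in> orderings V E rng"
    and top: "\<forall>m. \<forall>w\<in>V (Suc m). \<forall>f\<in>rinv E rng w. (f, t w) \<in> \<omega> w"
    using ordering_with_prescribed_maxima[of V t E rng] t by blast
  have "?U \<subseteq> Xmax E src rng v0 \<omega>"
    unfolding Xmax_def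
  proof (safe)
    fix y i f assume y: "y \<in> ?U" and f: "f \<in> rinv E rng (rng (y i))"
    have yp: "y \<in> paths E src rng v0" using y unfolding cyl_def by auto
    have "y i = t (rng (y i))" using t[OF rng_path_level[OF br yp, of i]] y by blast
    then show "(f, y i) \<in> \<omega> (rng (y i))" using top rng_path_level[OF br yp, of i] f by metis
  qed (auto simp: cyl_def)
  then have "?U \<subseteq> path_topology E src rng v0 interior_of Xmax E src rng v0 \<omega>"
    using interior_of_maximal cyl_open[OF xX] by blast
  moreover have "x \<in> ?U" using xX unfolding cyl_def by auto
  ultimately show ?thesis using om by blast
qed

subsection \<open>Duality between X_min and X_max\<close>

lemma Xmin_eq_Xmax_converse: "Xmin E src rng v0 \<omega> = Xmax E src rng v0 (\<lambda>v. (\<omega> v)\<inverse>)"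
  unfolding Xmin_def Xmax_def by auto

lemma orderings_converse: "\<omega> \<in> orderings V E rng \<Longrightarrow> (\<lambda>v. (\<omega> v)\<inverse>) \<in> orderings V E rng"
  unfolding orderings_def by simp

lemma Xmin_interior_iff_Xmax_interior:
  "(\<exists>\<omega>\<in>orderings V E rng. T interior_of Xmin E src rng v0 \<omega> \<noteq> {})
     \<longleftrightarrow> (\<exists>\<omega>\<in>orderings V E rng. T interior_of Xmax E src rng v0 \<omega> \<noteq> {})"
proof
  assume "\<exists>\<omega>\<in>orderings V E rng. T interior_of Xmin E src rng v0 \<omega> \<noteq> {}"
  then obtain \<omega> where "\<omega> \<in> orderings V E rng"
    "T interior_of Xmax E src rng v0 (\<lambda>v. (\<omega> v)\<inverse>) \<noteq> {}"
    unfolding Xmin_eq_Xmax_converse by blast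
  then show "\<exists>\<omega>\<in>orderings V E rng. T interior_of Xmax E src rng v0 \<omega> \<noteq> {}"
    using orderings_converse by blast
next
  assume "\<exists>\<omega>\<in>orderings V E rng. T interior_of Xmax E src rng v0 \<omega> \<noteq> {}"
  then obtain \<omega> where "\<omega> \<in> orderings V E rng" "T interior_of Xmax E src rng v0 \<omega> \<noteq> {}"
    by blast
  moreover have "Xmax E src rng v0 \<omega> = Xmin E src rng v0 (\<lambda>v. (\<omega> v)\<inverse>)"
    unfolding Xmin_eq_Xmax_converse by simp
  ultimately have "(\<lambda>v. (\<omega> v)\<inverse>) \<in> orderings V E rng"
    "T interior_of Xmin E src rng v0 (\<lambda>v. (\<omega> v)\<inverse>) \<noteq> {}"
    using orderings_converse by simp_all
  then show "\<exists>\<omega>\<in>orderings V E rng. T interior_of Xmin E src rng v0 \<omega> \<noteq> {}" by blast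
qed

theorem mainTheorem4:
  fixes V :: "nat \<Rightarrow> 'v set" and E :: "nat \<Rightarrow> 'e set"
    and src rng :: "'e \<Rightarrow> 'v" and v0 :: 'v
  assumes "bratteli V E src rng v0"
  shows "((\<exists>\<omega>\<in>orderings V E rng.
              path_topology E src rng v0 interior_of Xmax E src rng v0 \<omega> \<noteq> {})
          \<longleftrightarrow> (\<exists>x\<in>paths E src rng v0. \<exists>n\<ge>1.
                 \<forall>y\<in>cyl (paths E src rng v0) x n. \<forall>z\<in>cyl (paths E src rng v0) x n.
                    tail_equiv y z \<longrightarrow> y = z))
       \<and> ((\<exists>\<omega>\<in>orderings V E rng.
              path_topology E src rng v0 interior_of Xmin E src rng v0 \<omega> \<noteq> {})
          \<longleftrightarrow> (\<exists>x\<in>paths E src rng v0. \<exists>n\<ge>1.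
                 \<forall>y\<in>cyl (paths E src rng v0) x n. \<forall>z\<in>cyl (paths E src rng v0) x n.
                    tail_equiv y z \<longrightarrow> y = z))"
proof -
  have "(\<exists>\<omega>\<in>orderings V E rng.
            path_topology E src rng v0 interior_of Xmax E src rng v0 \<omega> \<noteq> {})
        \<longleftrightarrow> (\<exists>x\<in>paths E src rng v0. \<exists>n\<ge>1. tail_injective (cyl (paths E src rng v0) x n))"
    using Xmax_interior_cyl[OF assms] cyl_Xmax_interior[OF assms] by blast
  then show ?thesis
    unfolding Xmin_interior_iff_Xmax_interior tail_injective_def by (simp only:)
qed

end
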